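(* Fix $\lambda_1,\lambda_2,\lambda_3\in\mathbb{Z}_{\ge0}$ and an infinite reduced sequence $\mathbf{w}$, with ratio number sequence $\{k_j\}_{j\ge1}$. Then the sequence $\{\log k_j\}_{j\ge1}$ converges to a real number.
   Context: Generalized Markov mutations: $\mu_1(x_1,x_2,x_3)=(\frac{x_2^2+\lambda_1x_2x_3+x_3^2}{x_1},x_2,x_3)$, $\mu_2(x_1,x_2,x_3)=(x_1,\frac{x_1^2+\lambda_2x_1x_3+x_3^2}{x_2},x_3)$, $\mu_3(x_1,x_2,x_3)=(x_1,x_2,\frac{x_1^2+\lambda_3x_1x_2+x_2^2}{x_3})$. A sequence with entries in $\{1,2,3\}$ is reduced if consecutive entries differ. Ratio number sequence: $T_0=(1,1,1)$, $T_j=\mu_{w_j}(T_{j-1})$, and $k_j$ is the $w_j$-th component of $T_j$ divided by the product of the other two components of $T_j$. $\log$ is the natural logarithm. *)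

theory Defs
  imports Complex_Main
begin

fun gmut :: "real \<Rightarrow> real \<Rightarrow> real \<Rightarrow> nat \<Rightarrow> real \<times> real \<times> real \<Rightarrow> real \<times> real \<times> real" where
  "gmut l1 l2 l3 i (x1, x2, x3) =
     (if i = 1 then ((x2^2 + l1 * x2 * x3 + x3^2) / x1, x2, x3)
      else if i = 2 then (x1, (x1^2 + l2 * x1 * x3 + x3^2) / x2, x3)
      else if i = 3 then (x1, x2, (x1^2 + l3 * x1 * x2 + x2^2) / x3)
      else (x1, x2, x3))"

text \<open>Sequences w = (w_1, w_2, ...) are functions nat \<Rightarrow> nat; the value at 0 is ignored.\<close>

definition reduced_seq :: "(nat \<Rightarrow> nat) \<Rightarrow> bool" where
  "reduced_seq w \<longleftrightarrow> (\<forall>j\<ge>1. w j \<in> {1,2,3}) \<and> (\<forall>j\<ge>1. w j \<noteq> w (Suc j))"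

fun Tseq :: "real \<Rightarrow> real \<Rightarrow> real \<Rightarrow> (nat \<Rightarrow> nat) \<Rightarrow> nat \<Rightarrow> real \<times> real \<times> real" where
  "Tseq l1 l2 l3 w 0 = (1, 1, 1)"
| "Tseq l1 l2 l3 w (Suc j) = gmut l1 l2 l3 (w (Suc j)) (Tseq l1 l2 l3 w j)"

fun comp_ratio :: "nat \<Rightarrow> real \<times> real \<times> real \<Rightarrow> real" where
  "comp_ratio i (x1, x2, x3) =
     (if i = 1 then x1 / (x2 * x3) else if i = 2 then x2 / (x1 * x3) else x3 / (x1 * x2))"

definition ratio_num :: "real \<Rightarrow> real \<Rightarrow> real \<Rightarrow> (nat \<Rightarrow> nat) \<Rightarrow> nat \<Rightarrow> real" where
  "ratio_num l1 l2 l3 w j = comp_ratio (w j) (Tseq l1 l2 l3 w j)"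

end

theory Submission
  imports Defs
begin

text \<open>With \<open>K = 3 + \<lambda>\<^sub>1 + \<lambda>\<^sub>2 + \<lambda>\<^sub>3\<close>, every triple \<open>T\<^sub>j\<close> is a positive solution of
  \<open>x\<^sub>1\<^sup>2 + x\<^sub>2\<^sup>2 + x\<^sub>3\<^sup>2 + \<lambda>\<^sub>1 x\<^sub>2 x\<^sub>3 + \<lambda>\<^sub>2 x\<^sub>1 x\<^sub>3 + \<lambda>\<^sub>3 x\<^sub>1 x\<^sub>2 = K x\<^sub>1 x\<^sub>2 x\<^sub>3\<close>:
  this holds at \<open>(1,1,1)\<close>, and \<open>\<mu>\<^sub>i\<close> replaces \<open>x\<^sub>i\<close> by the other root of the equation read as a
  quadratic in \<open>x\<^sub>i\<close> (Vieta). The equation forces \<open>x\<^sub>i\<^sup>2 \<le> K x\<^sub>1 x\<^sub>2 x\<^sub>3\<close>, so every ratio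
  \<open>x\<^sub>i / (x\<^sub>j x\<^sub>k)\<close> lies in \<open>(0, K]\<close>. If the last mutation was at \<open>i\<close> and the next one is at
  \<open>m \<noteq> i\<close>, the new entry satisfies \<open>x\<^sub>m' \<ge> x\<^sub>i\<^sup>2 / x\<^sub>m\<close>, whence \<open>k\<^sub>j \<le> k\<^sub>j\<^sub>+\<^sub>1\<close>.
  So \<open>log k\<^sub>j\<close> is nondecreasing and bounded above by \<open>log K\<close>.\<close>

fun gmarkov_solution :: "real \<Rightarrow> real \<Rightarrow> real \<Rightarrow> real \<times> real \<times> real \<Rightarrow> bool" where
  "gmarkov_solution l1 l2 l3 (a, b, c) \<longleftrightarrow> a > 0 \<and> b > 0 \<and> c > 0 \<and>
     a^2 + b^2 + c^2 + l1*b*c + l2*a*c + l3*a*b = (3 + l1 + l2 + l3)*a*b*c"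

lemma vieta_jump:
  fixes a b c p q r K a' :: real
  assumes "a > 0" "b > 0" "c > 0" "p \<ge> 0"
    and eq: "a^2 + b^2 + c^2 + p*b*c + q*a*c + r*a*b = K*a*b*c"
    and a': "a' = (b^2 + p*b*c + c^2) / a"
  shows "a' > 0" "a'^2 + b^2 + c^2 + p*b*c + q*a'*c + r*a'*b = K*a'*b*c"
proof -
  show "a' > 0" unfolding a' using assms by (intro divide_pos_pos add_pos_pos add_nonneg_pos) auto
  define Q where "Q = b^2 + p*b*c + c^2"
  define s where "s = K*b*c - q*c - r*b"
  have quadratic: "a^2 + Q = s*a" using eq unfolding Q_def s_def by (simp add: algebra_simps)
  have "a'^2 + Q = Q * (a^2 + Q) / a^2"
    using \<open>a > 0\<close> unfolding a' Q_def[symmetric] by (simp add: field_simps power2_eq_square)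
  also have "\<dots> = s*a'"
    using \<open>a > 0\<close> unfolding quadratic a' Q_def[symmetric] by (simp add: field_simps power2_eq_square)
  finally show "a'^2 + b^2 + c^2 + p*b*c + q*a'*c + r*a'*b = K*a'*b*c"
    unfolding Q_def s_def by (simp add: algebra_simps)
qed

lemma gmarkov_solution_gmut:
  assumes "l1 \<ge> 0" "l2 \<ge> 0" "l3 \<ge> 0" "gmarkov_solution l1 l2 l3 t" "i \<in> {1, 2, 3}"
  shows "gmarkov_solution l1 l2 l3 (gmut l1 l2 l3 i t)"
proof -
  obtain a b c where t: "t = (a, b, c)" by (cases t)
  define K where "K = 3 + l1 + l2 + l3"
  have pos: "a > 0" "b > 0" "c > 0"
    and eq: "a^2 + b^2 + c^2 + l1*b*c + l2*a*c + l3*a*b = K*a*b*c"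
    using assms(4) unfolding t K_def by auto
  consider "i = 1" | "i = 2" | "i = 3" using assms(5) by auto
  then show ?thesis
  proof cases
    case 1
    define x where "x = (b^2 + l1*b*c + c^2) / a"
    have g: "gmut l1 l2 l3 i t = (x, b, c)" using 1 unfolding t x_def by simp
    note jump = vieta_jump[OF pos(1,2,3) assms(1) eq x_def]
    show ?thesis using jump pos unfolding g K_def by simp
  next
    case 2
    define x where "x = (a^2 + l2*a*c + c^2) / b"
    have g: "gmut l1 l2 l3 i t = (a, x, c)" using 2 unfolding t x_def by simp
    have "b^2 + a^2 + c^2 + l2*a*c + l1*b*c + l3*b*a = K*b*a*c" using eq by (simp add: algebra_simps)
    note jump = vieta_jump[OF pos(2,1,3) assms(2) this x_def]
    show ?thesis using jump pos unfolding g K_def by (simp add: algebra_simps)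
  next
    case 3
    define x where "x = (a^2 + l3*a*b + b^2) / c"
    have g: "gmut l1 l2 l3 i t = (a, b, x)" using 3 unfolding t x_def by simp
    have "c^2 + a^2 + b^2 + l3*a*b + l1*c*b + l2*c*a = K*c*a*b" using eq by (simp add: algebra_simps)
    note jump = vieta_jump[OF pos(3,1,2) assms(3) this x_def]
    show ?thesis using jump pos unfolding g K_def by (simp add: algebra_simps)
  qed
qed

lemma gmarkov_solution_Tseq:
  assumes "l1 \<ge> 0" "l2 \<ge> 0" "l3 \<ge> 0" "reduced_seq w"
  shows "gmarkov_solution l1 l2 l3 (Tseq l1 l2 l3 w j)"
proof (induction j)
  case 0
  show ?case by simp
next
  case (Suc j)
  have "w (Suc j) \<in> {1, 2, 3}" using assms(4) unfolding reduced_seq_def by auto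
  with gmarkov_solution_gmut[OF assms(1-3) Suc] show ?case by simp
qed

lemma ratio_le_of_square_le:
  fixes x y z K :: real
  assumes "x > 0" "y > 0" "z > 0" "x^2 \<le> K*x*y*z"
  shows "x / (y*z) \<le> K"
proof -
  have "x \<le> K*y*z" using assms(1,4) by (simp add: power2_eq_square mult.assoc)
  then show ?thesis using assms(2,3) by (simp add: divide_simps mult.assoc)
qed

lemma comp_ratio_bounds:
  assumes "l1 \<ge> 0" "l2 \<ge> 0" "l3 \<ge> 0" "gmarkov_solution l1 l2 l3 t"
  shows "0 < comp_ratio i t" "comp_ratio i t \<le> 3 + l1 + l2 + l3"
proof -
  obtain a b c where t: "t = (a, b, c)" by (cases t)
  define K where "K = 3 + l1 + l2 + l3"
  have pos: "a > 0" "b > 0" "c > 0"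
    and eq: "a^2 + b^2 + c^2 + l1*b*c + l2*a*c + l3*a*b = K*a*b*c"
    using assms(4) unfolding t K_def by auto
  have "0 \<le> l1*b*c" "0 \<le> l2*a*c" "0 \<le> l3*a*b" using pos assms(1-3) by auto
  then have "a^2 \<le> K*a*b*c" "b^2 \<le> K*a*b*c" "c^2 \<le> K*a*b*c"
    using eq zero_le_power2[of a] zero_le_power2[of b] zero_le_power2[of c] by linarith+
  then have "a / (b*c) \<le> K" "b / (a*c) \<le> K" "c / (a*b) \<le> K"
    using ratio_le_of_square_le[of a b c K] ratio_le_of_square_le[of b a c K]
      ratio_le_of_square_le[of c a b K] pos by (simp_all add: mult_ac)
  with pos show "0 < comp_ratio i t" "comp_ratio i t \<le> 3 + l1 + l2 + l3"
    unfolding t K_def by auto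
qed

lemma ratio_le_ratio_after_jump:
  fixes x y z Q :: real
  assumes "x > 0" "y > 0" "z > 0" "x^2 \<le> Q"
  shows "x / (y*z) \<le> (Q / y) / (x*z)"
proof -
  have "x / (y*z) = (x^2 / y) / (x*z)" using assms by (simp add: field_simps power2_eq_square)
  also have "\<dots> \<le> (Q / y) / (x*z)" using assms by (intro divide_right_mono) auto
  finally show ?thesis .
qed

lemma comp_ratio_le_comp_ratio_gmut:
  assumes "l1 \<ge> 0" "l2 \<ge> 0" "l3 \<ge> 0" "a > 0" "b > 0" "c > 0"
    and "i \<in> {1, 2, 3}" "m \<in> {1, 2, 3}" "i \<noteq> m"
  shows "comp_ratio i (a, b, c) \<le> comp_ratio m (gmut l1 l2 l3 m (a, b, c))"
proof -
  have sq_le: "x^2 \<le> x^2 + l*x*y + y^2" "y^2 \<le> x^2 + l*x*y + y^2"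
    if "l \<ge> 0" "x > 0" "y > 0" for l x y :: real
    using that by auto
  consider "i = 1" "m = 2" | "i = 1" "m = 3" | "i = 2" "m = 1"
    | "i = 2" "m = 3" | "i = 3" "m = 1" | "i = 3" "m = 2"
    using assms(7-9) by auto
  then show ?thesis
  proof cases
    case 1 then show ?thesis
      using ratio_le_ratio_after_jump[of a b c "a^2 + l2*a*c + c^2"] sq_le(1)[of l2 a c] assms
      by (simp add: mult_ac)
  next
    case 2 then show ?thesis
      using ratio_le_ratio_after_jump[of a c b "a^2 + l3*a*b + b^2"] sq_le(1)[of l3 a b] assms
      by (simp add: mult_ac)
  next
    case 3 then show ?thesis
      using ratio_le_ratio_after_jump[of b a c "b^2 + l1*b*c + c^2"] sq_le(1)[of l1 b c] assms
      by (simp add: mult_ac)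
  next
    case 4 then show ?thesis
      using ratio_le_ratio_after_jump[of b c a "a^2 + l3*a*b + b^2"] sq_le(2)[of l3 a b] assms
      by (simp add: mult_ac)
  next
    case 5 then show ?thesis
      using ratio_le_ratio_after_jump[of c a b "b^2 + l1*b*c + c^2"] sq_le(2)[of l1 b c] assms
      by (simp add: mult_ac)
  next
    case 6 then show ?thesis
      using ratio_le_ratio_after_jump[of c b a "a^2 + l2*a*c + c^2"] sq_le(2)[of l2 a c] assms
      by (simp add: mult_ac)
  qed
qed

theorem corollary6p9:
  fixes l1 l2 l3 :: nat and w :: "nat \<Rightarrow> nat"
  assumes "reduced_seq w"
  shows "\<exists>L::real. (\<lambda>j. ln (ratio_num (real l1) (real l2) (real l3) w (Suc j))) \<longlonglongrightarrow> L"
proof -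
  define k where "k j = ratio_num (real l1) (real l2) (real l3) w (Suc j)" for j
  have nonneg: "real l1 \<ge> 0" "real l2 \<ge> 0" "real l3 \<ge> 0" by auto
  note solution = gmarkov_solution_Tseq[OF nonneg assms]
  have bounds: "0 < k j" "k j \<le> 3 + real l1 + real l2 + real l3" for j
    unfolding k_def ratio_num_def using comp_ratio_bounds[OF nonneg solution] by blast+
  have "k j \<le> k (Suc j)" for j
  proof -
    have "w (Suc j) \<in> {1, 2, 3}" "w (Suc (Suc j)) \<in> {1, 2, 3}" "w (Suc j) \<noteq> w (Suc (Suc j))"
      using assms unfolding reduced_seq_def by auto
    moreover obtain a b c where "Tseq l1 l2 l3 w (Suc j) = (a, b, c)" by (cases "Tseq l1 l2 l3 w (Suc j)")
    moreover note solution[of "Suc j"]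
    ultimately show ?thesis
      unfolding k_def ratio_num_def using comp_ratio_le_comp_ratio_gmut[OF nonneg] by simp
  qed
  with bounds have "incseq (\<lambda>j. ln (k j))" by (intro incseq_SucI) simp
  moreover have "bdd_above (range (\<lambda>j. ln (k j)))"
    using bounds by (intro bdd_aboveI[where M = "ln (3 + real l1 + real l2 + real l3)"]) auto
  ultimately show ?thesis unfolding k_def[symmetric] using LIMSEQ_incseq_SUP by blast
qed

end
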